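(* Let $n\ge1$ and $z\in\{1,\dots,n+1\}$. Let $v_{n,z}=(a_1,\dots,a_n)$ with $a_i=z+1-i$ for $i<z$ and $a_i=1$ for $i\ge z$, and $v^{n,z}=(b_1,\dots,b_n)$ with $b_i=1$ for $i<z$ and $b_i=i+2-z$ for $i\ge z$. Then $v_{n,z}$ and $v^{n,z}$ realize the same triangulation except for one anti-clockwise rotation: the triangulation $F(v^{n,z})$ is obtained from $F(v_{n,z})$ by replacing every vertex label $l$ by $l-1$ (and the label $0$ by $n+2$).
   Context: A Dyck path of length $2N$ is a word in $U,D$ with $N$ of each letter such that every prefix has at least as many $U$'s as $D$'s; $\mathfrak{D}_{2N}$ is their set. For $G\in\mathfrak{D}_{2(n+1)}$ let $m_i$ be the number of $U$'s before the $i$-th $D$; $G$ is encoded by $v_G=(m_1-0,m_2-1,\dots,m_n-(n-1))$. For $u=(u_1,\dots,u_m)\in\mathbb{N}^m$ and $1\le i\le m$, $T_i(u)$ is defined by: $r_0=u_i$; while some $l\in\{1,\dots,i\}$ has $r_k-u_l>0$, let $l_k$ be the largest such $l$ and $r_{k+1}=r_k-u_{l_k}$; if this stops at $r_t$ after $t\ge0$ steps, $T_i(u)=r_t+t$. For $u\in\mathbb{N}^n$, $f(u)$ is the Dyck path $G\in\mathfrak{D}_{2(n+1)}$ with $v_G=(T_1(u),\dots,T_n(u))$. For $G\in\mathfrak{D}_{2(n+1)}$ let $\lambda_G=(\lambda_1,\dots,\lambda_n)$, where $\lambda_i$ is the number of $D$'s before the $(n+2-i)$-th $U$ in $G$. The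 triangulation $g(G)$ of the polygon with vertices labelled $0,1,\dots,n+2$ is built as follows: for $i=1,\dots,n$, in the current polygon (with $n+4-i$ vertices labelled consecutively $0,1,\dots,n+3-i$) draw the diagonal between the vertices labelled $\lambda_i$ and $\lambda_i+2$, delete the vertex labelled $\lambda_i+1$ (cutting off a triangle), and relabel the remaining polygon consecutively: vertices with label $\le\lambda_i$ keep their labels, and each vertex with label $j+1>\lambda_i+1$ receives label $j$. The drawn diagonals, expressed in the original labels $0,\dots,n+2$, form $g(G)$. Finally $F=g\circ f$. Example: $G=UDUDUUDD$ ($n=3$) has $\lambda_G=(2,2,1)$ and $g(G)=\{\{2,4\},\{2,5\},\{1,5\}\}$. *)

theory Defs
  imports Main "HOL-Library.While_Combinator"
begin

text \<open>Words in U,D are boolean lists: True = U, False = D. Positions are 0-based,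
  the paper's indices (i-th D, i-th U, T_i, ...) are 1-based.\<close>

definition dyck :: "nat \<Rightarrow> bool list \<Rightarrow> bool" where
  "dyck N w \<longleftrightarrow> length w = 2 * N \<and> count_list w True = N \<and> count_list w False = N \<and>
     (\<forall>k \<le> length w. count_list (take k w) False \<le> count_list (take k w) True)"

definition ups_before_D :: "bool list \<Rightarrow> nat \<Rightarrow> nat" where
  "ups_before_D w i = count_list (take ([p \<leftarrow> [0..<length w]. \<not> w ! p] ! (i - 1)) w) True"

definition vG :: "nat \<Rightarrow> bool list \<Rightarrow> nat list" where
  "vG n w = map (\<lambda>i. ups_before_D w i - (i - 1)) [1..<n+1]"

text \<open>The operator T_i on u = (u_1,...,u_m) (u_l = u ! (l-1)), computed by the
  literal while-loop on states (r_k, k).\<close>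
definition T_op :: "nat \<Rightarrow> nat list \<Rightarrow> nat" where
  "T_op i u = (case the (while_option
       (\<lambda>(r, t). \<exists>l \<in> {1..i}. r > u ! (l - 1))
       (\<lambda>(r, t). (r - u ! ((GREATEST l. l \<in> {1..i} \<and> r > u ! (l - 1)) - 1), Suc t))
       (u ! (i - 1), 0::nat)) of (r, t) \<Rightarrow> r + t)"

definition f_map :: "nat list \<Rightarrow> bool list" where
  "f_map u = (THE G. dyck (length u + 1) G \<and> vG (length u) G = map (\<lambda>i. T_op i u) [1..<length u + 1])"

definition Ds_before_U :: "bool list \<Rightarrow> nat \<Rightarrow> nat" where
  "Ds_before_U w k = count_list (take ([p \<leftarrow> [0..<length w]. w ! p] ! (k - 1)) w) False"

definition lambdaG :: "nat \<Rightarrow> bool list \<Rightarrow> nat list" where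
  "lambdaG n w = map (\<lambda>i. Ds_before_U w (n + 2 - i)) [1..<n+1]"

text \<open>One step of g: the state is (diagonals drawn so far, list of original labels of the
  current polygon, indexed by current labels).\<close>
definition g_step :: "nat \<Rightarrow> nat set set \<times> nat list \<Rightarrow> nat set set \<times> nat list" where
  "g_step l st = (case st of (D, cur) \<Rightarrow>
     (insert {cur ! l, cur ! (l + 2)} D, take (l + 1) cur @ drop (l + 2) cur))"

definition g_map :: "nat \<Rightarrow> bool list \<Rightarrow> nat set set" where
  "g_map n w = fst (fold g_step (lambdaG n w) ({}, [0..<n+3]))"

definition F_map :: "nat list \<Rightarrow> nat set set" where
  "F_map u = g_map (length u) (f_map u)"

definition v_low :: "nat \<Rightarrow> nat \<Rightarrow> nat list" where
  "v_low n z = map (\<lambda>i. if i < z then z + 1 - i else 1) [1..<n+1]"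

definition v_up :: "nat \<Rightarrow> nat \<Rightarrow> nat list" where
  "v_up n z = map (\<lambda>i. if i < z then 1 else i + 2 - z) [1..<n+1]"

definition rot_label :: "nat \<Rightarrow> nat \<Rightarrow> nat" where
  "rot_label n l = (if l = 0 then n + 2 else l - 1)"

end

theory Submission
  imports Defs
begin

(* Both Dyck paths are explicit. The vector v_{n,z} is non-increasing, so no T_i performs a
   reduction step and f(v_{n,z}) = U^z D^z (UD)^(n+1-z). In v^{n,z} every entry after the first
   from the z-th on exceeds its predecessor by exactly 1, so T_i is 1 for i < z and 2 otherwise,
   and f(v^{n,z}) = (UD)^(z-1) U (UD)^(n+1-z) D. Reading off lambda_G, the triangulation of the
   first path consists of the fan of diagonals from n+2 to z, ..., n and the fan from 0 to 2, ..., z;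
   that of the second consists of the fan from n+1 to z-1, ..., n-1 and the fan from n+2 to
   1, ..., z-1. The relabelling l |-> l-1 (0 |-> n+2) maps the first onto the second.
   All letter counts are computed through the positions of a letter in a word: before the
   (i+1)-th D there are exactly i D's, hence (position - i) U's. *)

lemma count_list_replicate [simp]: "count_list (replicate m x) y = (if x = y then m else 0)"
  by (induction m) auto

definition positions :: "'a \<Rightarrow> 'a list \<Rightarrow> nat list" where
  "positions x w = [p \<leftarrow> [0..<length w]. w ! p = x]"

lemma positions_Nil [simp]: "positions x [] = []"
  by (simp add: positions_def)

lemma positions_Cons:
  "positions x (y # w) = (if y = x then [0] else []) @ map Suc (positions x w)"
  unfolding positions_def
  by (simp add: upt_conv_Cons map_Suc_upt[symmetric] filter_map o_def del: upt_Suc)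

lemma positions_append:
  "positions x (xs @ ys) = positions x xs @ map (\<lambda>p. p + length xs) (positions x ys)"
  by (induction xs) (auto simp: positions_Cons o_def)

lemma positions_replicate [simp]:
  "positions x (replicate m y) = (if y = x then [0..<m] else [])"
  by (induction m) (auto simp: positions_Cons map_Suc_upt upt_conv_Cons simp del: upt_Suc)

lemma length_positions [simp]: "length (positions x w) = count_list w x"
  by (induction w) (auto simp: positions_Cons)

lemma positions_less_length: "p \<in> set (positions x w) \<Longrightarrow> p < length w"
  by (simp add: positions_def)

lemma count_list_take_positions:
  "i < count_list w x \<Longrightarrow> count_list (take (positions x w ! i) w) x = i"
proof (induction w arbitrary: i)
  case (Cons y w)
  then show ?case by (cases i) (auto simp: positions_Cons nth_Cons')
qed simp

lemma length_eq_count_True_False: "length w = count_list w True + count_list w False"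
  by (induction w) auto

lemma count_list_take_positions_compl:
  assumes "i < count_list w c"
  shows "count_list (take (positions c w ! i) w) (\<not> c) = positions c w ! i - i"
proof -
  let ?p = "positions c w ! i"
  have "?p < length w"
    using assms positions_less_length nth_mem by (metis length_positions)
  then have "count_list (take ?p w) c + count_list (take ?p w) (\<not> c) = ?p"
    using length_eq_count_True_False[of "take ?p w"] by (cases c) auto
  then show ?thesis using count_list_take_positions[OF assms] by simp
qed

lemma ups_before_D_eq:
  "i < count_list w False \<Longrightarrow> ups_before_D w (Suc i) = positions False w ! i - i"
  using count_list_take_positions_compl[of i w False]
  by (simp add: ups_before_D_def positions_def)

lemma Ds_before_U_eq:
  "k < count_list w True \<Longrightarrow> Ds_before_U w (Suc k) = positions True w ! k - k"
  using count_list_take_positions_compl[of k w True]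
  by (simp add: Ds_before_U_def positions_def)

definition ballot :: "bool list \<Rightarrow> bool" where
  "ballot w \<longleftrightarrow> (\<forall>k \<le> length w. count_list (take k w) False \<le> count_list (take k w) True)"

lemma dyck_iff_ballot:
  "dyck N w \<longleftrightarrow> length w = 2 * N \<and> count_list w True = N \<and> count_list w False = N \<and> ballot w"
  by (auto simp: dyck_def ballot_def)

lemma ballot_Nil [simp]: "ballot []"
  by (simp add: ballot_def)

lemma ballot_count_le: "ballot w \<Longrightarrow> count_list w False \<le> count_list w True"
  unfolding ballot_def by (metis order_refl take_all)

lemma ballot_append:
  assumes "ballot xs" "ballot ys"
  shows "ballot (xs @ ys)"
  unfolding ballot_def
proof (intro allI impI)
  fix k assume k: "k \<le> length (xs @ ys)"
  show "count_list (take k (xs @ ys)) False \<le> count_list (take k (xs @ ys)) True"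
  proof (cases "k \<le> length xs")
    case True
    then show ?thesis using assms(1) by (simp add: ballot_def)
  next
    case False
    have "count_list (take (k - length xs) ys) False \<le> count_list (take (k - length xs) ys) True"
      using assms(2) k by (simp add: ballot_def)
    then show ?thesis using False ballot_count_le[OF assms(1)] by simp
  qed
qed

lemma ballot_Cons_True: "ballot xs \<Longrightarrow> ballot (True # xs)"
  unfolding ballot_def by (auto simp: take_Cons' le_Suc_eq intro: le_SucI)

lemma ballot_snoc_False:
  assumes "ballot xs" "count_list xs False < count_list xs True"
  shows "ballot (xs @ [False])"
  unfolding ballot_def
proof (intro allI impI)
  fix k assume "k \<le> length (xs @ [False])"
  then consider "k \<le> length xs" | "k = Suc (length xs)" by fastforce
  then show "count_list (take k (xs @ [False])) False \<le> count_list (take k (xs @ [False])) True"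
    by cases (use assms in \<open>auto simp: ballot_def\<close>)
qed

lemma ballot_wrap: "ballot xs \<Longrightarrow> ballot (True # xs @ [False])"
  using ballot_snoc_False[of "True # xs"] ballot_Cons_True ballot_count_le by fastforce

lemma dyck_obtain_snoc_False:
  assumes "dyck (Suc N) w"
  obtains v where "w = v @ [False]"
proof -
  have "w \<noteq> []" using assms by (auto simp: dyck_def)
  then obtain v x where w: "w = v @ [x]" by (metis rev_exhaust)
  have "\<forall>k \<le> length w. count_list (take k w) False \<le> count_list (take k w) True"
    using assms by (simp add: dyck_def)
  then have "count_list v False \<le> count_list v True"
    using w by (metis append_eq_conv_conj le_add1 length_append)
  then have "x = False" using assms w by (cases x) (auto simp: dyck_def)
  then show thesis using that w by blast
qed

lemma ups_before_D_ge:
  assumes "dyck N w" "i < N"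
  shows "i \<le> ups_before_D w (Suc i)"
proof -
  let ?p = "positions False w ! i"
  have "?p \<le> length w"
    using assms positions_less_length[of ?p False w] by (simp add: dyck_def)
  then have "count_list (take ?p w) False \<le> count_list (take ?p w) True"
    using assms(1) by (simp add: dyck_def)
  moreover have "count_list (take ?p w) False = i"
    using assms by (intro count_list_take_positions) (simp add: dyck_def)
  ultimately show ?thesis by (simp add: ups_before_D_def positions_def)
qed

lemma length_vG [simp]: "length (vG n w) = n"
  by (simp add: vG_def)

lemma vG_nth: "i < n \<Longrightarrow> vG n w ! i = ups_before_D w (Suc i) - i"
  by (simp add: vG_def del: upt_Suc)

(* The subtraction in v_G is truncated; ups_before_D_ge makes it invertible on Dyck paths. *)
lemma positions_False_dyck:
  assumes "dyck (Suc n) w" "i < n"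
  shows "positions False w ! i = vG n w ! i + 2 * i"
  using assms ups_before_D_ge[OF assms(1), of i] ups_before_D_eq[of i w]
  by (simp add: vG_nth dyck_def)

lemma bool_list_eqI_positions:
  assumes "length v = length w" "positions False v = positions False w"
  shows "v = w"
proof (rule nth_equalityI)
  fix p assume "p < length v"
  moreover have "p \<in> set (positions False v) \<longleftrightarrow> p \<in> set (positions False w)"
    using assms(2) by simp
  ultimately show "v ! p = w ! p"
    using assms(1) by (auto simp: positions_def)
qed (fact assms(1))

(* v_G only records n of the n + 1 D's; the last one is the final letter. *)
lemma dyck_eq_if_vG_eq:
  assumes v: "dyck (Suc n) v" and w: "dyck (Suc n) w" and vG: "vG n v = vG n w"
  shows "v = w"
proof (rule bool_list_eqI_positions)
  show "length v = length w" using v w by (simp add: dyck_def)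
  have last: "positions False u ! n = Suc (2 * n)" if u: "dyck (Suc n) u" for u
  proof -
    obtain v where v: "u = v @ [False]"
      using dyck_obtain_snoc_False[OF u] .
    then have "positions False u = positions False v @ [length v]"
      by (simp add: positions_append positions_Cons)
    moreover have "length (positions False v) = n" "length v = Suc (2 * n)"
      using u v by (auto simp: dyck_def)
    ultimately show ?thesis by (simp add: nth_append)
  qed
  show "positions False v = positions False w"
  proof (rule nth_equalityI)
    show "length (positions False v) = length (positions False w)" using v w by (simp add: dyck_def)
    fix i assume "i < length (positions False v)"
    then have "i < n \<or> i = n" using v by (auto simp: dyck_def)
    then show "positions False v ! i = positions False w ! i"
      using positions_False_dyck[OF v] positions_False_dyck[OF w] vG last[OF v] last[OF w] by auto
  qed
qed

lemma f_map_eqI: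
  assumes "dyck (length u + 1) G" "vG (length u) G = map (\<lambda>i. T_op i u) [1..<length u + 1]"
  shows "f_map u = G"
  unfolding f_map_def
  by (rule the_equality) (use assms dyck_eq_if_vG_eq in auto)

lemma T_op_eq_nth_if_prefix_min:
  assumes "\<forall>l\<in>{1..i}. u ! (i - 1) \<le> u ! (l - 1)"
  shows "T_op i u = u ! (i - 1)"
  unfolding T_op_def using assms by (subst while_option_unfold) (auto simp: not_less)

lemma T_op_one_step:
  assumes "g \<in> {1..i}" "u ! (g - 1) < u ! (i - 1)"
    and "\<And>l. l \<in> {1..i} \<Longrightarrow> u ! (l - 1) < u ! (i - 1) \<Longrightarrow> l \<le> g"
    and "\<forall>l\<in>{1..i}. u ! (i - 1) - u ! (g - 1) \<le> u ! (l - 1)"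
  shows "T_op i u = u ! (i - 1) - u ! (g - 1) + 1"
proof -
  define B where "B = (\<lambda>(r, t::nat). \<exists>l \<in> {1..i}. r > u ! (l - 1))"
  define C where "C = (\<lambda>(r, t). (r - u ! ((GREATEST l. l \<in> {1..i} \<and> r > u ! (l - 1)) - 1), Suc t))"
  have "(GREATEST l. l \<in> {1..i} \<and> u ! (i - 1) > u ! (l - 1)) = g"
    using assms(1-3) by (intro Greatest_equality) auto
  then have step: "C (u ! (i - 1), 0) = (u ! (i - 1) - u ! (g - 1), 1)"
    by (simp add: C_def)
  have "B (u ! (i - 1), 0)" "\<not> B (u ! (i - 1) - u ! (g - 1), 1)"
    using assms by (auto simp: B_def not_less)
  then have "while_option B C (u ! (i - 1), 0) = Some (u ! (i - 1) - u ! (g - 1), 1)"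
    using step by (subst while_option_unfold, simp, subst while_option_unfold, simp)
  then show ?thesis unfolding T_op_def B_def C_def by simp
qed

lemma length_v_low [simp]: "length (v_low n z) = n"
  by (simp add: v_low_def)

lemma length_v_up [simp]: "length (v_up n z) = n"
  by (simp add: v_up_def)

lemma nth_v_low: "i < n \<Longrightarrow> v_low n z ! i = (if Suc i < z then z - i else 1)"
  by (simp add: v_low_def del: upt_Suc)

lemma nth_v_up: "i < n \<Longrightarrow> v_up n z ! i = (if Suc i < z then 1 else Suc i + 2 - z)"
  by (simp add: v_up_def del: upt_Suc)

lemma T_op_v_low: "1 \<le> i \<Longrightarrow> i \<le> n \<Longrightarrow> T_op i (v_low n z) = v_low n z ! (i - 1)"
  by (rule T_op_eq_nth_if_prefix_min) (auto simp: nth_v_low, linarith)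

lemma T_op_v_up:
  assumes "1 \<le> z" "1 \<le> i" "i \<le> n"
  shows "T_op i (v_up n z) = (if i < z then 1 else 2)"
proof (cases "i < z \<or> i = 1")
  case True
  then have "T_op i (v_up n z) = v_up n z ! (i - 1)"
    using assms by (intro T_op_eq_nth_if_prefix_min) (auto simp: nth_v_up)
  then show ?thesis using assms True by (auto simp: nth_v_up)
next
  case False
  then have "T_op i (v_up n z) = v_up n z ! (i - 1) - v_up n z ! (i - 1 - 1) + 1"
    using assms by (intro T_op_one_step) (auto simp: nth_v_up split: if_splits, linarith+)
  then show ?thesis using assms False by (auto simp: nth_v_up)
qed

definition updown :: "nat \<Rightarrow> bool list" where
  "updown k = concat (replicate k [True, False])"

definition low_path :: "nat \<Rightarrow> nat \<Rightarrow> bool list" where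
  "low_path n z = replicate z True @ replicate z False @ updown (n + 1 - z)"

definition up_path :: "nat \<Rightarrow> nat \<Rightarrow> bool list" where
  "up_path n z = updown (z - 1) @ True # updown (n + 1 - z) @ [False]"

lemma updown_Suc: "updown (Suc k) = updown k @ [True, False]"
  by (simp add: updown_def replicate_append_same[symmetric])

lemma length_updown [simp]: "length (updown k) = 2 * k"
  by (simp add: updown_def length_concat sum_list_replicate)

lemma count_list_updown [simp]: "count_list (updown k) c = k"
  by (induction k) (auto simp: updown_Suc, simp add: updown_def)

lemma positions_updown:
  "positions True (updown k) = map (\<lambda>j. 2 * j) [0..<k]"
  "positions False (updown k) = map (\<lambda>j. 2 * j + 1) [0..<k]"
  by (induction k) (simp_all add: updown_Suc positions_append positions_Cons, simp_all add: updown_def)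

lemma ballot_updown: "ballot (updown k)"
  by (induction k) (simp_all add: updown_Suc ballot_append ballot_wrap[of "[]", simplified], simp add: updown_def)

lemma ballot_replicate_True_False: "ballot (replicate z True @ replicate z False)"
proof (induction z)
  case (Suc z)
  then show ?case
    using ballot_wrap[of "replicate z True @ replicate z False"]
    by (metis append_Cons append_assoc replicate_Suc replicate_append_same)
qed simp

lemma dyck_low_path: "z \<le> n + 1 \<Longrightarrow> dyck (n + 1) (low_path n z)"
  using ballot_append[OF ballot_replicate_True_False ballot_updown, of z "n + 1 - z"]
  by (simp add: dyck_iff_ballot low_path_def)

lemma dyck_up_path: "1 \<le> z \<Longrightarrow> z \<le> n + 1 \<Longrightarrow> dyck (n + 1) (up_path n z)"
  by (simp add: dyck_iff_ballot up_path_def ballot_append ballot_updown ballot_wrap[simplified])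

lemma ups_before_D_low_path:
  assumes "z \<le> n + 1" "i \<le> n"
  shows "ups_before_D (low_path n z) (Suc i) = (if i < z then z else Suc i)"
  using assms
  by (subst ups_before_D_eq) (auto simp: low_path_def positions_append positions_updown nth_append)

lemma ups_before_D_up_path:
  assumes "1 \<le> z" "z \<le> n + 1" "i < n"
  shows "ups_before_D (up_path n z) (Suc i) = (if i < z - 1 then Suc i else i + 2)"
  using assms
  by (subst ups_before_D_eq)
    (auto simp: up_path_def positions_append positions_Cons positions_updown nth_append)

lemma Ds_before_U_low_path:
  assumes "z \<le> n + 1" "k \<le> n"
  shows "Ds_before_U (low_path n z) (Suc k) = (if k < z then 0 else k)"
  using assms
  by (subst Ds_before_U_eq) (auto simp: low_path_def positions_append positions_updown nth_append)

lemma Ds_before_U_up_path: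
  assumes "1 \<le> z" "z \<le> n + 1" "k \<le> n"
  shows "Ds_before_U (up_path n z) (Suc k) = (if k < z then k else k - 1)"
  using assms
  by (subst Ds_before_U_eq)
    (auto simp: up_path_def positions_append positions_Cons positions_updown nth_append)

lemma f_map_v_low:
  assumes "z \<le> n + 1"
  shows "f_map (v_low n z) = low_path n z"
proof (rule f_map_eqI)
  show "dyck (length (v_low n z) + 1) (low_path n z)"
    using dyck_low_path[OF assms] by simp
  have "vG n (low_path n z) = v_low n z"
    using assms by (intro nth_equalityI) (auto simp: vG_nth nth_v_low ups_before_D_low_path)
  also have "\<dots> = map (\<lambda>i. T_op i (v_low n z)) [1..<n + 1]"
    by (intro nth_equalityI) (simp_all add: T_op_v_low del: upt_Suc)
  finally show "vG (length (v_low n z)) (low_path n z)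
      = map (\<lambda>i. T_op i (v_low n z)) [1..<length (v_low n z) + 1]"
    by simp
qed

lemma f_map_v_up:
  assumes "1 \<le> z" "z \<le> n + 1"
  shows "f_map (v_up n z) = up_path n z"
proof (rule f_map_eqI)
  show "dyck (length (v_up n z) + 1) (up_path n z)"
    using dyck_up_path[OF assms] by simp
  have "vG n (up_path n z) = map (\<lambda>i. T_op i (v_up n z)) [1..<n + 1]"
    using assms
    by (intro nth_equalityI) (auto simp: vG_nth ups_before_D_up_path T_op_v_up simp del: upt_Suc)
  then show "vG (length (v_up n z)) (up_path n z)
      = map (\<lambda>i. T_op i (v_up n z)) [1..<length (v_up n z) + 1]"
    by simp
qed

lemma g_step_eq:
  "length xs = Suc (Suc l) \<Longrightarrow>
    g_step l (D, xs @ r # rest) = (insert {xs ! l, r} D, take (Suc l) xs @ r # rest)"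
  by (simp add: g_step_def nth_append)

lemma fold_g_step_rev_upt:
  assumes "a \<le> b" "length xs = Suc b"
  shows "fold g_step (rev [a..<b]) (D, xs @ r # rest)
    = (D \<union> (\<lambda>k. {xs ! k, r}) ` {a..<b}, take (Suc a) xs @ r # rest)"
  using assms
proof (induction b arbitrary: xs D rule: dec_induct)
  case base
  then show ?case by simp
next
  case (step b)
  have "fold g_step (rev [a..<Suc b]) (D, xs @ r # rest)
      = fold g_step (rev [a..<b]) (insert {xs ! b, r} D, take (Suc b) xs @ r # rest)"
    using step g_step_eq[of xs b D r rest] by simp
  also have "\<dots> = (insert {xs ! b, r} D \<union> (\<lambda>k. {xs ! k, r}) ` {a..<b}, take (Suc a) xs @ r # rest)"
    using step by simp
  also have "insert {xs ! b, r} D \<union> (\<lambda>k. {xs ! k, r}) ` {a..<b} = D \<union> (\<lambda>k. {xs ! k, r}) ` {a..<Suc b}"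
    using step.hyps by (simp add: atLeastLessThanSuc)
  finally show ?case .
qed

lemma fold_g_step_replicate_0:
  assumes "Suc j < length xs"
  shows "fold g_step (replicate j 0) (D, xs)
    = (D \<union> (\<lambda>k. {xs ! 0, xs ! k}) ` {2..Suc j}, xs ! 0 # drop (Suc j) xs)"
  using assms
proof (induction j)
  case 0
  then show ?case by (cases xs) auto
next
  case (Suc j)
  have "fold g_step (replicate (Suc j) 0) (D, xs) = g_step 0 (fold g_step (replicate j 0) (D, xs))"
    by (simp only: fold_replicate funpow.simps(2) o_apply)
  also have "\<dots> = g_step 0 (D \<union> (\<lambda>k. {xs ! 0, xs ! k}) ` {2..Suc j}, xs ! 0 # drop (Suc j) xs)"
    using Suc by simp
  also have "\<dots> = (D \<union> (\<lambda>k. {xs ! 0, xs ! k}) ` {2..Suc (Suc j)}, xs ! 0 # drop (Suc (Suc j)) xs)"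
    using Suc.prems
    by (simp add: g_step_def atLeastAtMostSuc_conv Cons_nth_drop_Suc[symmetric] drop_Suc nth_tl)
  finally show ?case .
qed

lemma lambdaG_conv: "lambdaG n w = rev (map (\<lambda>k. Ds_before_U w (Suc k)) [1..<n + 1])"
  by (rule nth_equalityI) (auto simp: lambdaG_def rev_nth Suc_diff_Suc Suc_diff_le simp del: upt_Suc)

lemma lambdaG_low_path:
  assumes "1 \<le> z" "z \<le> n + 1"
  shows "lambdaG n (low_path n z) = rev [z..<n + 1] @ replicate (z - 1) 0"
proof -
  have "[1..<n + 1] = [1..<z] @ [z..<n + 1]"
    using assms upt_add_eq_append[of 1 z "n + 1 - z"] by simp
  moreover have "map (\<lambda>k. Ds_before_U (low_path n z) (Suc k)) [1..<z] = replicate (z - 1) 0"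
    using assms by (intro nth_equalityI) (simp_all add: Ds_before_U_low_path del: upt_Suc)
  moreover have "map (\<lambda>k. Ds_before_U (low_path n z) (Suc k)) [z..<n + 1] = [z..<n + 1]"
    using assms by (intro nth_equalityI) (simp_all add: Ds_before_U_low_path del: upt_Suc)
  ultimately show ?thesis
    by (simp add: lambdaG_conv del: upt_Suc)
qed

lemma lambdaG_up_path:
  assumes "1 \<le> z" "z \<le> n + 1"
  shows "lambdaG n (up_path n z) = rev [z - 1..<n] @ rev [1..<z]"
proof -
  have "[1..<n + 1] = [1..<z] @ [z..<n + 1]"
    using assms upt_add_eq_append[of 1 z "n + 1 - z"] by simp
  moreover have "map (\<lambda>k. Ds_before_U (up_path n z) (Suc k)) [1..<z] = [1..<z]"
    using assms by (intro nth_equalityI) (simp_all add: Ds_before_U_up_path del: upt_Suc)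
  moreover have "map (\<lambda>k. Ds_before_U (up_path n z) (Suc k)) [z..<n + 1] = [z - 1..<n]"
    using assms by (intro nth_equalityI) (simp_all add: Ds_before_U_up_path del: upt_Suc)
  ultimately show ?thesis
    by (simp add: lambdaG_conv del: upt_Suc)
qed

lemma g_map_low_path:
  assumes "1 \<le> z" "z \<le> n + 1"
  shows "g_map n (low_path n z) = (\<lambda>k. {k, n + 2}) ` {z..<n + 1} \<union> (\<lambda>k. {0, k}) ` {2..z}"
proof -
  let ?xs = "[0..<n + 2]" and ?ys = "[0..<z + 1] @ [n + 2]"
  have "[0..<n + 3] = ?xs @ [n + 2]"
    by (simp add: numeral_3_eq_3)
  then have "fold g_step (rev [z..<n + 1]) ({}, [0..<n + 3])
      = ((\<lambda>k. {?xs ! k, n + 2}) ` {z..<n + 1}, ?ys)"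
    using assms fold_g_step_rev_upt[of z "n + 1" ?xs "{}" "n + 2" "[]"] by (simp del: upt_Suc)
  also have "(\<lambda>k. {?xs ! k, n + 2}) ` {z..<n + 1} = (\<lambda>k. {k, n + 2}) ` {z..<n + 1}"
    by (rule image_cong) (simp_all del: upt_Suc)
  finally have first: "fold g_step (rev [z..<n + 1]) ({}, [0..<n + 3])
      = ((\<lambda>k. {k, n + 2}) ` {z..<n + 1}, ?ys)" .
  have "g_map n (low_path n z)
      = fst (fold g_step (replicate (z - 1) 0) ((\<lambda>k. {k, n + 2}) ` {z..<n + 1}, ?ys))"
    using assms first by (simp add: g_map_def lambdaG_low_path del: upt_Suc)
  also have "\<dots> = (\<lambda>k. {k, n + 2}) ` {z..<n + 1} \<union> (\<lambda>k. {?ys ! 0, ?ys ! k}) ` {2..z}"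
    using assms fold_g_step_replicate_0[of "z - 1" ?ys] by (simp del: upt_Suc)
  also have "(\<lambda>k. {?ys ! 0, ?ys ! k}) ` {2..z} = (\<lambda>k. {0, k}) ` {2..z}"
    by (rule image_cong) (simp_all add: nth_append del: upt_Suc)
  finally show ?thesis .
qed

lemma g_map_up_path:
  assumes "1 \<le> z" "z \<le> n + 1"
  shows "g_map n (up_path n z) = (\<lambda>k. {k, n + 1}) ` {z - 1..<n} \<union> (\<lambda>k. {k, n + 2}) ` {1..<z}"
proof -
  let ?xs = "[0..<n + 1]" and ?ys = "[0..<z] @ [n + 1]"
  have "[0..<n + 3] = ?xs @ [n + 1, n + 2]"
    by (simp add: numeral_3_eq_3)
  then have "fold g_step (rev [z - 1..<n]) ({}, [0..<n + 3])
      = ((\<lambda>k. {?xs ! k, n + 1}) ` {z - 1..<n}, ?ys @ [n + 2])"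
    using assms fold_g_step_rev_upt[of "z - 1" n ?xs "{}" "n + 1" "[n + 2]"] by (simp del: upt_Suc)
  also have "(\<lambda>k. {?xs ! k, n + 1}) ` {z - 1..<n} = (\<lambda>k. {k, n + 1}) ` {z - 1..<n}"
    by (rule image_cong) (simp_all del: upt_Suc)
  finally have first: "fold g_step (rev [z - 1..<n]) ({}, [0..<n + 3])
      = ((\<lambda>k. {k, n + 1}) ` {z - 1..<n}, ?ys @ [n + 2])" .
  have "g_map n (up_path n z)
      = fst (fold g_step (rev [1..<z]) ((\<lambda>k. {k, n + 1}) ` {z - 1..<n}, ?ys @ [n + 2]))"
    using assms first by (simp add: g_map_def lambdaG_up_path del: upt_Suc)
  also have "\<dots> = (\<lambda>k. {k, n + 1}) ` {z - 1..<n} \<union> (\<lambda>k. {?ys ! k, n + 2}) ` {1..<z}"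
    using assms fold_g_step_rev_upt[of 1 z ?ys _ "n + 2" "[]"] by (simp del: upt_Suc)
  also have "(\<lambda>k. {?ys ! k, n + 2}) ` {1..<z} = (\<lambda>k. {k, n + 2}) ` {1..<z}"
    by (rule image_cong) (simp_all add: nth_append del: upt_Suc)
  finally show ?thesis .
qed

theorem lemma18:
  fixes n z :: nat
  assumes "1 \<le> n" and "1 \<le> z" and "z \<le> n + 1"
  shows "F_map (v_up n z) = (\<lambda>e. rot_label n ` e) ` F_map (v_low n z)"
proof -
  have F_low: "F_map (v_low n z) = (\<lambda>k. {k, n + 2}) ` {z..<n + 1} \<union> (\<lambda>k. {0, k}) ` {2..z}"
    using assms by (simp add: F_map_def f_map_v_low g_map_low_path)
  have shift: "{z..<n + 1} = Suc ` {z - 1..<n}" "{2..z} = Suc ` {1..<z}"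
    using assms by (simp_all add: atLeastLessThanSuc_atLeastAtMost)
  have low: "F_map (v_low n z) = (\<lambda>k. {Suc k, n + 2}) ` {z - 1..<n} \<union> (\<lambda>k. {0, Suc k}) ` {1..<z}"
    using F_low unfolding shift image_image .
  have up: "F_map (v_up n z) = (\<lambda>k. {k, n + 1}) ` {z - 1..<n} \<union> (\<lambda>k. {k, n + 2}) ` {1..<z}"
    using assms by (simp add: F_map_def f_map_v_up g_map_up_path)
  have "rot_label n ` {Suc k, n + 2} = {k, n + 1}" "rot_label n ` {0, Suc k} = {k, n + 2}" for k
    by (auto simp: rot_label_def)
  then show ?thesis
    unfolding up low image_Un image_image by simp
qed

end
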